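(* Let $h$ be the unique function on pairs of disjoint subsets of $\{1,\dots,n\}$ satisfying \[ h(\emptyset,J)=\delta_{\emptyset,J},\qquad h(I,J)=e^{2b_{\iota(I)}}\sum_{K\subset J}\Bigl(\prod_{i\in K}|\zeta_{i,\iota(I)}|\Bigr)h(I'\cup K,J\setminus K)\quad\text{if }I\ne\emptyset, \] with $I'=I\setminus\{\iota(I)\}$. Then $|g(I,J)|\le h(I,J)$ for all disjoint $I,J\subset\{1,\dots,n\}$, where $g(I,J)=(\Psi^{*(-1)}*D_I\Psi)(J)$.
   Context: Fix $n\ge1$, real numbers $b_1,\dots,b_n\ge0$ and complex numbers $\zeta_{ij}=\zeta_{ji}$ such that $\prod_{i,j\in I,i<j}|1+\zeta_{ij}|\le\prod_{i\in I}e^{b_i}$ for every $I\subset\{1,\dots,n\}$. Let $\mathcal{A}$ be the set of complex functions on the power set of $\{1,\dots,n\}$, with product $f*g(I)=\sum_{J\subset I}f(J)g(I\setminus J)$, unit $1_{\mathcal A}(I)=\delta_{I,\emptyset}$; any $f$ with $f(\emptyset)\ne0$ has a unique $*$-inverse $f^{*(-1)}$. $D_If(J)=f(I\cup J)$ if $I\cap J=\emptyset$, $0$ otherwise. $\Psi(I)=\prod_{i,j\in I,i<j}(1+\zeta_{ij})$. $\iota$ assigns to each nonempty $I$ an element $\iota(I)\in I$ with $\prod_{j\in I\setminus\{\iota(I)\}}|1+\zeta_{j,\iota(I)}|\le e^{2b_{\iota(I)}}$. Empty sums are $0$, empty products are $1$. *)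

theory Defs
  imports Complex_Main
begin

text \<open>The algebra A: complex functions on subsets of {1..n} (represented as
  functions nat set => complex, only values on subsets of {1..n} matter).\<close>

definition aconv :: "(nat set \<Rightarrow> complex) \<Rightarrow> (nat set \<Rightarrow> complex) \<Rightarrow> nat set \<Rightarrow> complex" where
  "aconv f g I = (\<Sum>J\<in>Pow I. f J * g (I - J))"

definition aunit :: "nat set \<Rightarrow> complex" where
  "aunit I = (if I = {} then 1 else 0)"

definition ainv :: "nat \<Rightarrow> (nat set \<Rightarrow> complex) \<Rightarrow> nat set \<Rightarrow> complex" where
  "ainv n f = (THE g. (\<forall>I. I \<subseteq> {1..n} \<longrightarrow> aconv f g I = aunit I)
                    \<and> (\<forall>I. \<not> I \<subseteq> {1..n} \<longrightarrow> g I = 0))"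

definition Dop :: "nat set \<Rightarrow> (nat set \<Rightarrow> complex) \<Rightarrow> nat set \<Rightarrow> complex" where
  "Dop I f J = (if I \<inter> J = {} then f (I \<union> J) else 0)"

definition Psi :: "(nat \<Rightarrow> nat \<Rightarrow> complex) \<Rightarrow> nat set \<Rightarrow> complex" where
  "Psi \<zeta> I = (\<Prod>(i, j)\<in>{(i, j). i \<in> I \<and> j \<in> I \<and> i < j}. 1 + \<zeta> i j)"

end

theory Submission
  imports Defs
begin

(* Write g(I,J) = (G * D_I Psi)(J) with G the *-inverse of Psi.
   For I = {} this is (G * Psi)(J) = delta_{J,{}} = h({},J).  For I nonempty pick
   i = iota(I) and I' = I - {i}.  Splitting off the factors of Psi that contain i,
     D_I Psi(J) = prod_{j in I'} (1 + zeta_ji) * sum_{K <= J} (prod_{k in K} zeta_ki) * D_{I' u K} Psi(J - K),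
   and this recursion survives convolution with G on the left.  Taking norms,
   bounding |prod_{j in I'} (1 + zeta_ji)| by exp(2 b_i) via the choice of iota, and
   inducting on |I| + |J| (which drops by one in every recursive call) gives |g| <= h. *)

text \<open>A recursively defined right *-inverse of f when f {} = 1: the equation
  (f * g)(I) = 0 for nonempty I determines g(I) from g on smaller sets.\<close>
function conv_rinv :: "(nat set \<Rightarrow> complex) \<Rightarrow> nat set \<Rightarrow> complex" where
  "conv_rinv f I = (if finite I \<and> I \<noteq> {} then
      - (\<Sum>J\<in>{J\<in>Pow I. J \<noteq> {}}. f J * conv_rinv f (I - J)) else (if I = {} then 1 else 0))"
  by auto
termination
  by (relation "measure (\<lambda>(f, I). card I)") (auto intro!: psubset_card_mono)

declare conv_rinv.simps[simp del]

lemma aconv_split_empty: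
  assumes "finite I"
  shows "aconv f g I = f {} * g I + (\<Sum>J\<in>{J\<in>Pow I. J \<noteq> {}}. f J * g (I - J))"
proof -
  have nonempty_split: "Pow I = insert {} {J\<in>Pow I. J \<noteq> {}}" by auto
  have "aconv f g I = (\<Sum>J\<in>insert {} {J\<in>Pow I. J \<noteq> {}}. f J * g (I - J))"
    unfolding aconv_def by (simp only: nonempty_split[symmetric])
  also have "\<dots> = f {} * g I + (\<Sum>J\<in>{J\<in>Pow I. J \<noteq> {}}. f J * g (I - J))"
    by (subst sum.insert) (use assms in auto)
  finally show ?thesis .
qed

lemma aconv_commute: "aconv f g I = aconv g f I"
  unfolding aconv_def
  by (rule sum.reindex_bij_witness[where i = "\<lambda>J. I - J" and j = "\<lambda>J. I - J"])
     (auto simp: Diff_Diff_Int inf.absorb2 mult.commute)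

lemma right_inverse_unique:
  assumes f0: "f {} = 1"
    and g1: "\<forall>I. I \<subseteq> {1..n} \<longrightarrow> aconv f g1 I = aunit I" "\<forall>I. \<not> I \<subseteq> {1..n} \<longrightarrow> g1 I = 0"
    and g2: "\<forall>I. I \<subseteq> {1..n} \<longrightarrow> aconv f g2 I = aunit I" "\<forall>I. \<not> I \<subseteq> {1..n} \<longrightarrow> g2 I = 0"
  shows "g1 I = g2 I"
proof (induction "card I" arbitrary: I rule: less_induct)
  case less
  show ?case
  proof (cases "I \<subseteq> {1..n}")
    case False
    then show ?thesis using g1 g2 by auto
  next
    case True
    then have fin: "finite I" using finite_subset by blast
    have smaller: "(\<Sum>J\<in>{J\<in>Pow I. J \<noteq> {}}. f J * g1 (I - J))
                 = (\<Sum>J\<in>{J\<in>Pow I. J \<noteq> {}}. f J * g2 (I - J))"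
    proof (intro sum.cong refl)
      fix J assume "J \<in> {J\<in>Pow I. J \<noteq> {}}"
      then have "card (I - J) < card I" using fin by (auto intro!: psubset_card_mono)
      then show "f J * g1 (I - J) = f J * g2 (I - J)" using less by simp
    qed
    have "aconv f g1 I = aconv f g2 I" using g1 g2 True by simp
    then show ?thesis using aconv_split_empty[OF fin, of f] f0 smaller by simp
  qed
qed

lemma ainv_right_inverse:
  assumes f0: "f {} = 1" and I: "I \<subseteq> {1..n}"
  shows "aconv f (ainv n f) I = aunit I"
proof -
  let ?P = "\<lambda>g. (\<forall>I. I \<subseteq> {1..n} \<longrightarrow> aconv f g I = aunit I) \<and> (\<forall>I. \<not> I \<subseteq> {1..n} \<longrightarrow> g I = 0)"
  define g0 where "g0 I = (if I \<subseteq> {1..n} then conv_rinv f I else 0)" for I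
  have "?P g0"
  proof (intro conjI allI impI)
    fix I :: "nat set" assume I: "I \<subseteq> {1..n}"
    then have fin: "finite I" using finite_subset by blast
    have "aconv f g0 I = g0 I + (\<Sum>J\<in>{J\<in>Pow I. J \<noteq> {}}. f J * g0 (I - J))"
      using aconv_split_empty[OF fin] f0 by simp
    also have "(\<Sum>J\<in>{J\<in>Pow I. J \<noteq> {}}. f J * g0 (I - J))
             = (\<Sum>J\<in>{J\<in>Pow I. J \<noteq> {}}. f J * conv_rinv f (I - J))"
      using I by (intro sum.cong) (auto simp: g0_def)
    finally show "aconv f g0 I = aunit I"
      using I fin by (subst (asm) g0_def, simp add: conv_rinv.simps[of f I] aunit_def)
  qed (simp add: g0_def)
  moreover have "g = g0" if "?P g" for g
  proof
    fix I
    show "g I = g0 I"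
      by (rule right_inverse_unique[where f = f and n = n]) (use f0 that \<open>?P g0\<close> in auto)
  qed
  ultimately have "?P (ainv n f)"
    unfolding ainv_def by (rule theI)
  then show ?thesis using I by blast
qed

lemma Psi_empty: "Psi \<zeta> {} = 1"
  unfolding Psi_def by simp

lemma Psi_insert:
  assumes fin: "finite S" and iS: "i \<notin> S" and sym: "\<forall>j\<in>S. \<zeta> i j = \<zeta> j i"
  shows "Psi \<zeta> (insert i S) = Psi \<zeta> S * (\<Prod>j\<in>S. 1 + \<zeta> j i)"
proof -
  let ?pairs = "\<lambda>S. {(a, b). a \<in> S \<and> b \<in> S \<and> a < b}"
  let ?below = "(\<lambda>j. (j, i)) ` {j\<in>S. j < i}"
  let ?above = "(\<lambda>j. (i, j)) ` {j\<in>S. i < j}"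
  have fin_pairs: "finite (?pairs S)"
    by (rule finite_subset[of _ "S \<times> S"]) (use fin in auto)
  have split: "?pairs (insert i S) = ?pairs S \<union> (?below \<union> ?above)"
    using iS by auto
  have "Psi \<zeta> (insert i S)
      = Psi \<zeta> S * ((\<Prod>(a,b)\<in>?below. 1 + \<zeta> a b) * (\<Prod>(a,b)\<in>?above. 1 + \<zeta> a b))"
  proof -
    have "?pairs S \<inter> (?below \<union> ?above) = {}" "?below \<inter> ?above = {}" using iS by auto
    then show ?thesis
      unfolding Psi_def split using fin fin_pairs by (simp add: prod.union_disjoint)
  qed
  also have "(\<Prod>(a,b)\<in>?below. 1 + \<zeta> a b) = (\<Prod>j\<in>{j\<in>S. j < i}. 1 + \<zeta> j i)"
    by (subst prod.reindex) (auto simp: inj_on_def)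
  also have "(\<Prod>(a,b)\<in>?above. 1 + \<zeta> a b) = (\<Prod>j\<in>{j\<in>S. i < j}. 1 + \<zeta> j i)"
    using sym by (subst prod.reindex) (auto simp: inj_on_def intro!: prod.cong)
  also have "(\<Prod>j\<in>{j\<in>S. j < i}. 1 + \<zeta> j i) * (\<Prod>j\<in>{j\<in>S. i < j}. 1 + \<zeta> j i)
           = (\<Prod>j\<in>S. 1 + \<zeta> j i)"
  proof -
    have "S = {j\<in>S. j < i} \<union> {j\<in>S. i < j}" using iS by (auto, metis nat_neq_iff)
    then show ?thesis
      using fin by (metis (no_types, lifting) prod.union_disjoint finite_Un disjoint_iff
          mem_Collect_eq less_asym)
  qed
  finally show ?thesis .
qed

text \<open>The recursion for D_I Psi: expand the factors prod_{j \<in> J} (1 + zeta_ji)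
  by the binomial formula and absorb K into the derivative index.\<close>
lemma Dop_Psi_recursion:
  assumes fI: "finite I" and fJ: "finite J" and iI: "i \<in> I" and dj: "I \<inter> J = {}"
    and sym: "\<forall>j\<in>I \<union> J. \<zeta> i j = \<zeta> j i"
  shows "Dop I (Psi \<zeta>) J = (\<Prod>j\<in>I-{i}. 1 + \<zeta> j i) *
     (\<Sum>K\<in>Pow J. (\<Prod>k\<in>K. \<zeta> k i) * Dop ((I-{i}) \<union> K) (Psi \<zeta>) (J-K))"
proof -
  let ?I' = "I - {i}"
  have "Dop I (Psi \<zeta>) J = Psi \<zeta> (insert i (?I' \<union> J))"
  proof -
    have "insert i (?I' \<union> J) = I \<union> J" using iI by auto
    then show ?thesis unfolding Dop_def using dj by simp
  qed
  also have "\<dots> = Psi \<zeta> (?I' \<union> J) * (\<Prod>j\<in>?I' \<union> J. 1 + \<zeta> j i)"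
    by (rule Psi_insert) (use fI fJ iI dj sym in auto)
  also have "(\<Prod>j\<in>?I' \<union> J. 1 + \<zeta> j i) = (\<Prod>j\<in>?I'. 1 + \<zeta> j i) * (\<Prod>j\<in>J. \<zeta> j i + 1)"
    by (subst prod.union_disjoint) (use fI fJ dj in \<open>auto simp: add.commute\<close>)
  also have "(\<Prod>j\<in>J. \<zeta> j i + 1) = (\<Sum>K\<in>Pow J. \<Prod>k\<in>K. \<zeta> k i)"
    using prod_add[OF fJ, of "\<lambda>j. \<zeta> j i" "\<lambda>_. 1"] by simp
  finally have expanded: "Dop I (Psi \<zeta>) J
      = Psi \<zeta> (?I' \<union> J) * ((\<Prod>j\<in>?I'. 1 + \<zeta> j i) * (\<Sum>K\<in>Pow J. \<Prod>k\<in>K. \<zeta> k i))" .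
  have "Dop (?I' \<union> K) (Psi \<zeta>) (J-K) = Psi \<zeta> (?I' \<union> J)" if "K \<in> Pow J" for K
    unfolding Dop_def using that dj by (auto intro!: arg_cong[where f="Psi \<zeta>"])
  then show ?thesis
    unfolding expanded sum_distrib_left by (intro sum.cong refl) (simp add: mult_ac)
qed

text \<open>The same recursion holds after convolving with any G on the left, since the
  pieces D_{I' \<union> K} Psi only depend on the complement J - K.\<close>
lemma conv_Dop_Psi_recursion:
  assumes fI: "finite I" and fJ: "finite J" and iI: "i \<in> I" and dj: "I \<inter> J = {}"
    and sym: "\<forall>j\<in>I \<union> J. \<zeta> i j = \<zeta> j i"
  shows "aconv G (Dop I (Psi \<zeta>)) J = (\<Prod>j\<in>I-{i}. 1 + \<zeta> j i) *
     (\<Sum>K\<in>Pow J. (\<Prod>k\<in>K. \<zeta> k i) * aconv G (Dop ((I-{i}) \<union> K) (Psi \<zeta>)) (J-K))"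
proof -
  let ?A = "\<Prod>j\<in>I-{i}. 1 + \<zeta> j i"
  let ?z = "\<lambda>K. \<Prod>k\<in>K. \<zeta> k i"
  let ?D = "\<lambda>K. Dop ((I-{i}) \<union> K) (Psi \<zeta>)"
  have "aconv G (Dop I (Psi \<zeta>)) J
      = (\<Sum>L\<in>Pow J. G L * (?A * (\<Sum>K\<in>Pow (J-L). ?z K * ?D K (J-L-K))))"
    unfolding aconv_def
    by (intro sum.cong refl arg_cong2[where f="(*)"] Dop_Psi_recursion) (use assms in auto)
  also have "\<dots> = ?A * (\<Sum>L\<in>Pow J. \<Sum>K\<in>{K. K \<in> Pow J \<and> L \<inter> K = {}}. G L * (?z K * ?D K (J-K-L)))"
    unfolding sum_distrib_left
    by (intro sum.cong refl) (auto simp: mult_ac Diff_eq Int_commute Int_left_commute)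
  also have "(\<Sum>L\<in>Pow J. \<Sum>K\<in>{K. K \<in> Pow J \<and> L \<inter> K = {}}. G L * (?z K * ?D K (J-K-L)))
           = (\<Sum>K\<in>Pow J. \<Sum>L\<in>{L. L \<in> Pow J \<and> L \<inter> K = {}}. G L * (?z K * ?D K (J-K-L)))"
    by (rule sum.swap_restrict) (use fJ in auto)
  also have "\<dots> = (\<Sum>K\<in>Pow J. ?z K * aconv G (?D K) (J-K))"
    unfolding aconv_def sum_distrib_left by (intro sum.cong refl) (auto simp: mult_ac)
  finally show ?thesis .
qed

lemma norm_weighted_sum_le:
  fixes A :: complex and z g :: "'a \<Rightarrow> complex" and h :: "'a \<Rightarrow> real"
  assumes "cmod A \<le> c" and "\<And>K. K \<in> S \<Longrightarrow> cmod (g K) \<le> h K"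
  shows "cmod (A * (\<Sum>K\<in>S. z K * g K)) \<le> c * (\<Sum>K\<in>S. cmod (z K) * h K)"
proof -
  have "cmod (\<Sum>K\<in>S. z K * g K) \<le> (\<Sum>K\<in>S. cmod (z K) * cmod (g K))"
    by (rule order.trans[OF norm_sum]) (simp add: norm_mult)
  also have "\<dots> \<le> (\<Sum>K\<in>S. cmod (z K) * h K)"
    using assms(2) by (intro sum_mono mult_left_mono) auto
  finally have "cmod (\<Sum>K\<in>S. z K * g K) \<le> (\<Sum>K\<in>S. cmod (z K) * h K)" .
  then show ?thesis
    unfolding norm_mult using assms(1) by (intro mult_mono) (auto intro: order_trans[OF norm_ge_zero])
qed

lemma conv_Dop_Psi_bound:
  fixes b :: "nat \<Rightarrow> real" and \<zeta> :: "nat \<Rightarrow> nat \<Rightarrow> complex"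
    and \<iota> :: "nat set \<Rightarrow> nat" and h :: "nat set \<Rightarrow> nat set \<Rightarrow> real"
  assumes G: "\<And>J. J \<subseteq> {1..n} \<Longrightarrow> aconv G (Psi \<zeta>) J = aunit J"
    and zeta_sym: "\<forall>i\<in>{1..n}. \<forall>j\<in>{1..n}. \<zeta> i j = \<zeta> j i"
    and iota: "\<forall>I. I \<subseteq> {1..n} \<longrightarrow> I \<noteq> {} \<longrightarrow>
        \<iota> I \<in> I \<and> (\<Prod>j\<in>I - {\<iota> I}. cmod (1 + \<zeta> j (\<iota> I))) \<le> exp (2 * b (\<iota> I))"
    and h_empty: "\<forall>J. J \<subseteq> {1..n} \<longrightarrow> h {} J = (if J = {} then 1 else 0)"
    and h_rec: "\<forall>I J. I \<subseteq> {1..n} \<longrightarrow> J \<subseteq> {1..n} \<longrightarrow> I \<inter> J = {} \<longrightarrow> I \<noteq> {} \<longrightarrow>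
        h I J = exp (2 * b (\<iota> I)) *
          (\<Sum>K\<in>Pow J. (\<Prod>i\<in>K. cmod (\<zeta> i (\<iota> I))) * h ((I - {\<iota> I}) \<union> K) (J - K))"
    and I: "I \<subseteq> {1..n}" and J: "J \<subseteq> {1..n}" and dj: "I \<inter> J = {}"
  shows "cmod (aconv G (Dop I (Psi \<zeta>)) J) \<le> h I J"
  using I J dj
proof (induction "card I + card J" arbitrary: I J rule: less_induct)
  case less
  have fI: "finite I" and fJ: "finite J" using less.prems finite_subset by blast+
  show ?case
  proof (cases "I = {}")
    case True
    have "Dop {} (Psi \<zeta>) = Psi \<zeta>" by (rule ext) (simp add: Dop_def)
    then show ?thesis using True G less.prems h_empty by (simp add: aunit_def)
  next
    case False
    define i where "i = \<iota> I"
    have iI: "i \<in> I" and A_bound: "(\<Prod>j\<in>I - {i}. cmod (1 + \<zeta> j i)) \<le> exp (2 * b i)"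
      using iota less.prems False unfolding i_def by auto
    have sym: "\<forall>j\<in>I \<union> J. \<zeta> i j = \<zeta> j i" using zeta_sym less.prems iI by blast
    have IH: "cmod (aconv G (Dop ((I-{i}) \<union> K) (Psi \<zeta>)) (J-K)) \<le> h ((I-{i}) \<union> K) (J-K)"
      if K: "K \<in> Pow J" for K
    proof (rule less.hyps)
      have "card ((I-{i}) \<union> K) \<le> card (I-{i}) + card K" by (rule card_Un_le)
      moreover have "card (I-{i}) < card I" using fI iI by (rule card_Diff1_less)
      moreover have "card K + card (J - K) = card J"
        using K fJ by (simp add: card_Diff_subset card_mono finite_subset)
      ultimately show "card ((I-{i}) \<union> K) + card (J - K) < card I + card J" by linarith
    qed (use K less.prems in auto)
    have "cmod (aconv G (Dop I (Psi \<zeta>)) J)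
        \<le> exp (2 * b i) * (\<Sum>K\<in>Pow J. cmod (\<Prod>k\<in>K. \<zeta> k i) * h ((I-{i}) \<union> K) (J-K))"
      unfolding conv_Dop_Psi_recursion[OF fI fJ iI less.prems(3) sym]
      by (rule norm_weighted_sum_le) (use A_bound IH in \<open>auto simp: prod_norm\<close>)
    also have "\<dots> = h I J"
      using h_rec less.prems False unfolding i_def by (simp add: prod_norm)
    finally show ?thesis .
  qed
qed

theorem mainTheorem6:
  fixes n :: nat and b :: "nat \<Rightarrow> real" and \<zeta> :: "nat \<Rightarrow> nat \<Rightarrow> complex"
    and \<iota> :: "nat set \<Rightarrow> nat" and h :: "nat set \<Rightarrow> nat set \<Rightarrow> real"
  assumes n_ge: "n \<ge> 1"
    and b_nonneg: "\<forall>i\<in>{1..n}. b i \<ge> 0"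
    and zeta_sym: "\<forall>i\<in>{1..n}. \<forall>j\<in>{1..n}. \<zeta> i j = \<zeta> j i"
    and zeta_bound: "\<forall>I. I \<subseteq> {1..n} \<longrightarrow>
        (\<Prod>(i, j)\<in>{(i, j). i \<in> I \<and> j \<in> I \<and> i < j}. cmod (1 + \<zeta> i j)) \<le> (\<Prod>i\<in>I. exp (b i))"
    and iota: "\<forall>I. I \<subseteq> {1..n} \<longrightarrow> I \<noteq> {} \<longrightarrow>
        \<iota> I \<in> I \<and> (\<Prod>j\<in>I - {\<iota> I}. cmod (1 + \<zeta> j (\<iota> I))) \<le> exp (2 * b (\<iota> I))"
    and h_empty: "\<forall>J. J \<subseteq> {1..n} \<longrightarrow> h {} J = (if J = {} then 1 else 0)"
    and h_rec: "\<forall>I J. I \<subseteq> {1..n} \<longrightarrow> J \<subseteq> {1..n} \<longrightarrow> I \<inter> J = {} \<longrightarrow> I \<noteq> {} \<longrightarrow>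
        h I J = exp (2 * b (\<iota> I)) *
          (\<Sum>K\<in>Pow J. (\<Prod>i\<in>K. cmod (\<zeta> i (\<iota> I))) * h ((I - {\<iota> I}) \<union> K) (J - K))"
  shows "\<forall>I J. I \<subseteq> {1..n} \<longrightarrow> J \<subseteq> {1..n} \<longrightarrow> I \<inter> J = {} \<longrightarrow>
           cmod (aconv (ainv n (Psi \<zeta>)) (Dop I (Psi \<zeta>)) J) \<le> h I J"
proof (intro allI impI)
  fix I J assume "I \<subseteq> {1..n}" "J \<subseteq> {1..n}" "I \<inter> J = {}"
  moreover have "\<And>J. J \<subseteq> {1..n} \<Longrightarrow> aconv (ainv n (Psi \<zeta>)) (Psi \<zeta>) J = aunit J"
    using ainv_right_inverse[of "Psi \<zeta>"] Psi_empty aconv_commute by metis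
  ultimately show "cmod (aconv (ainv n (Psi \<zeta>)) (Dop I (Psi \<zeta>)) J) \<le> h I J"
    using conv_Dop_Psi_bound[OF _ zeta_sym iota h_empty h_rec] by blast
qed

end
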